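(* For every integer $d>1$, $\lambda^*(d,2^{d-1})=1-2^{-d}$.
   Context: For integers $n\ge d\ge 1$, a $d$-flat in $\mathbb{F}_2^n$ is a set $x_0+U$ with $x_0\in\mathbb{F}_2^n$ and $U$ a $d$-dimensional linear subspace of $\mathbb{F}_2^n$. For $A\subseteq\mathbb{F}_2^n$ and an integer $0\le s\le 2^d$, $\lambda^*(n,d,s,A)$ denotes the fraction of $d$-flats $Q$ in $\mathbb{F}_2^n$ with $|Q\cap A|=s$. Let $\lambda^*(n,d,s)=\max_{A\subseteq\mathbb{F}_2^n}\lambda^*(n,d,s,A)$; this is non-increasing in $n$, and $\lambda^*(d,s)=\lim_{n\to\infty}\lambda^*(n,d,s)$. *)

theory Defs
  imports Complex_Main
begin

text \<open>The vector space F_2^n is modelled as the set of subsets of {..<n}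
  (a vector is identified with its support); addition is symmetric difference.\<close>

definition F2vec :: "nat \<Rightarrow> nat set set" where
  "F2vec n = Pow {..<n}"

definition vadd :: "nat set \<Rightarrow> nat set \<Rightarrow> nat set" where
  "vadd x y = (x - y) \<union> (y - x)"

text \<open>The F_2-linear combination  sum over i in S of v i.\<close>
definition comb :: "(nat \<Rightarrow> nat set) \<Rightarrow> nat set \<Rightarrow> nat set" where
  "comb v S = {j. odd (card {i \<in> S. j \<in> v i})}"

definition lin_indep :: "nat \<Rightarrow> (nat \<Rightarrow> nat set) \<Rightarrow> bool" where
  "lin_indep d v \<longleftrightarrow> (\<forall>S \<subseteq> {..<d}. comb v S = {} \<longrightarrow> S = {})"

definition lin_subspace :: "nat \<Rightarrow> nat set set \<Rightarrow> bool" where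
  "lin_subspace n U \<longleftrightarrow> U \<subseteq> F2vec n \<and> {} \<in> U \<and> (\<forall>x\<in>U. \<forall>y\<in>U. vadd x y \<in> U)"

definition dim_subspace :: "nat \<Rightarrow> nat \<Rightarrow> nat set set \<Rightarrow> bool" where
  "dim_subspace n d U \<longleftrightarrow> lin_subspace n U \<and>
     (\<exists>v. (\<forall>i<d. v i \<in> U) \<and> lin_indep d v \<and> U = {comb v S | S. S \<subseteq> {..<d}})"

definition flats :: "nat \<Rightarrow> nat \<Rightarrow> nat set set set" where
  "flats n d = {Q. \<exists>x0 \<in> F2vec n. \<exists>U. dim_subspace n d U \<and> Q = vadd x0 ` U}"

definition lambdaA :: "nat \<Rightarrow> nat \<Rightarrow> nat \<Rightarrow> nat set set \<Rightarrow> real" where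
  "lambdaA n d s A = real (card {Q \<in> flats n d. card (Q \<inter> A) = s}) / real (card (flats n d))"

definition lambda_n :: "nat \<Rightarrow> nat \<Rightarrow> nat \<Rightarrow> real" where
  "lambda_n n d s = Max {lambdaA n d s A | A. A \<subseteq> F2vec n}"

end

theory Submission
  imports Defs "HOL-Combinatorics.Transposition" "HOL-Real_Asymp.Real_Asymp"
begin

text \<open>Let \<open>g\<close> be the sign function of \<open>A\<close>. For a \<open>d\<close>-flat \<open>Q\<close> the square of
  \<open>\<Sum>x\<in>Q. g x = 2^d - 2 |Q \<inter> A|\<close> vanishes if \<open>Q\<close> is balanced, i.e. \<open>|Q \<inter> A| = 2^(d-1)\<close>,
  and is at most \<open>4^d\<close> otherwise. The affine group is transitive on pairs of distinct points,
  so every such pair lies in the same number \<open>c\<close> of \<open>d\<close>-flats, and expanding the squares gives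
  \<open>\<Sum>Q. (\<Sum>x\<in>Q. g x)^2 = |flats| 2^d + c ((\<Sum>x. g x)^2 - 2^n) \<ge> |flats| 2^d - c 2^n\<close>.
  Hence at least \<open>(|flats| 2^d - c 2^n) / 4^d\<close> flats are unbalanced, with equality for the
  hyperplane \<open>{x. x\<^sub>0 = 1}\<close>: it has \<open>\<Sum>x. g x = 0\<close> and meets every flat in none, all or
  exactly half of its points. The same identity for \<open>g = 1\<close> determines \<open>c\<close>, and the result
  is \<open>\<lambda>*(n, d, 2^(d-1)) = (1 - 2^-d) (1 + 1 / (2^n - 1))\<close> for all \<open>n \<ge> d\<close>.\<close>

lemma vadd_commute: "vadd x y = vadd y x"
  by (auto simp: vadd_def)

lemma vadd_assoc: "vadd (vadd x y) z = vadd x (vadd y z)"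
  by (auto simp: vadd_def)

lemma vadd_self [simp]: "vadd x x = {}"
  by (auto simp: vadd_def)

lemma vadd_empty [simp]: "vadd x {} = x" "vadd {} x = x"
  by (auto simp: vadd_def)

lemma vadd_vadd_cancel [simp]: "vadd x (vadd x y) = y" "vadd (vadd y x) x = y"
  by (auto simp: vadd_def)

lemma vadd_eq_empty_iff: "vadd x y = {} \<longleftrightarrow> x = y"
  by (auto simp: vadd_def)

lemma mem_vadd_iff: "j \<in> vadd x y \<longleftrightarrow> (j \<in> x) \<noteq> (j \<in> y)"
  by (auto simp: vadd_def)

lemma inj_vadd: "inj (vadd x)"
  by (metis injI vadd_vadd_cancel(1))

lemma vadd_in_F2vec: "x \<in> F2vec n \<Longrightarrow> y \<in> F2vec n \<Longrightarrow> vadd x y \<in> F2vec n"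
  by (auto simp: vadd_def F2vec_def)

lemma empty_in_F2vec [simp]: "{} \<in> F2vec n"
  by (simp add: F2vec_def)

lemma finite_F2vec [simp]: "finite (F2vec n)"
  by (simp add: F2vec_def)

lemma card_F2vec: "card (F2vec n) = 2 ^ n"
  by (simp add: F2vec_def card_Pow)

lemma odd_card_vadd:
  assumes "finite P" "finite Q"
  shows "odd (card (vadd P Q)) \<longleftrightarrow> odd (card P) \<noteq> odd (card Q)"
proof -
  have "P \<union> Q = vadd P Q \<union> (P \<inter> Q)" "vadd P Q \<inter> (P \<inter> Q) = {}" "finite (vadd P Q)"
    using assms by (auto simp: vadd_def)
  then have "card (vadd P Q) + card (P \<inter> Q) = card (P \<union> Q)"
    using assms by (simp add: card_Un_disjoint)
  moreover have "card P + card Q = card (P \<union> Q) + card (P \<inter> Q)"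
    using assms by (rule card_Un_Int)
  ultimately show ?thesis
    by presburger
qed

lemma comb_empty [simp]: "comb v {} = {}"
  by (simp add: comb_def)

lemma comb_vadd:
  assumes "finite S" "finite T"
  shows "comb v (vadd S T) = vadd (comb v S) (comb v T)"
proof (rule set_eqI)
  fix j
  have "{i \<in> vadd S T. j \<in> v i} = vadd {i \<in> S. j \<in> v i} {i \<in> T. j \<in> v i}"
    by (auto simp: vadd_def)
  then show "j \<in> comb v (vadd S T) \<longleftrightarrow> j \<in> vadd (comb v S) (comb v T)"
    using assms by (simp add: comb_def mem_vadd_iff odd_card_vadd)
qed

lemma comb_insert:
  assumes "finite S" "i \<notin> S"
  shows "comb v (insert i S) = vadd (v i) (comb v S)"
proof -
  have "{k. k = i \<and> j \<in> v k} = (if j \<in> v i then {i} else {})" for j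
    by auto
  then have "comb v {i} = v i"
    by (auto simp: comb_def)
  moreover have "insert i S = vadd {i} S"
    using assms by (auto simp: vadd_def)
  ultimately show ?thesis
    using comb_vadd[of "{i}" S v] assms by simp
qed

lemma comb_in_F2vec:
  assumes "\<And>i. i \<in> S \<Longrightarrow> v i \<in> F2vec n"
  shows "comb v S \<in> F2vec n"
proof -
  have "j < n" if "j \<in> comb v S" for j
  proof -
    from that have "card {i \<in> S. j \<in> v i} > 0"
      by (simp add: comb_def odd_pos)
    then have "{i \<in> S. j \<in> v i} \<noteq> {}"
      using card_gt_0_iff by blast
    then show ?thesis
      using assms by (auto simp: F2vec_def)
  qed
  then show ?thesis
    by (auto simp: F2vec_def)
qed

lemma inj_on_comb:
  assumes "lin_indep d v"
  shows "inj_on (comb v) (Pow {..<d})"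
proof (rule inj_onI)
  fix S T
  assume S: "S \<in> Pow {..<d}" and T: "T \<in> Pow {..<d}" and eq: "comb v S = comb v T"
  have "finite S" "finite T"
    using S T finite_subset by auto
  then have "comb v (vadd S T) = {}"
    using eq by (simp add: comb_vadd)
  moreover have "vadd S T \<subseteq> {..<d}"
    using S T by (auto simp: vadd_def)
  ultimately have "vadd S T = {}"
    using assms by (auto simp: lin_indep_def)
  then show "S = T"
    by (simp add: vadd_eq_empty_iff)
qed

lemma flatsI: "x0 \<in> F2vec n \<Longrightarrow> dim_subspace n d U \<Longrightarrow> Q = vadd x0 ` U \<Longrightarrow> Q \<in> flats n d"
  unfolding flats_def by blast

lemma flatsE:
  assumes "Q \<in> flats n d"
  obtains x0 U v where "x0 \<in> F2vec n" "lin_subspace n U" "\<forall>i<d. v i \<in> U" "lin_indep d v"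
    "U = comb v ` Pow {..<d}" "Q = vadd x0 ` U"
proof -
  obtain x0 U v where "x0 \<in> F2vec n" "Q = vadd x0 ` U" "lin_subspace n U" "\<forall>i<d. v i \<in> U"
    "lin_indep d v" "U = {comb v S | S. S \<subseteq> {..<d}}"
    using assms by (auto simp: flats_def dim_subspace_def)
  moreover have "{comb v S | S. S \<subseteq> {..<d}} = comb v ` Pow {..<d}"
    by auto
  ultimately show ?thesis
    using that by simp
qed

lemma flat_subset_F2vec: "Q \<in> flats n d \<Longrightarrow> Q \<subseteq> F2vec n"
  by (erule flatsE) (auto simp: lin_subspace_def intro!: vadd_in_F2vec)

lemma finite_flat: "Q \<in> flats n d \<Longrightarrow> finite Q"
  using finite_subset[OF flat_subset_F2vec finite_F2vec] .

lemma card_flat: "Q \<in> flats n d \<Longrightarrow> card Q = 2 ^ d"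
proof (erule flatsE)
  fix x0 U v
  assume "lin_indep d v" "U = comb v ` Pow {..<d}" "Q = vadd x0 ` U"
  then have "card Q = card (Pow {..<d})"
    by (simp add: card_image inj_on_subset[OF inj_vadd] inj_on_comb)
  then show "card Q = 2 ^ d"
    by (simp add: card_Pow)
qed

lemma finite_flats: "finite (flats n d)"
  by (rule finite_subset[of _ "Pow (F2vec n)"]) (auto dest: flat_subset_F2vec)

lemma Pow_lessThan_in_flats:
  assumes "d \<le> n"
  shows "Pow {..<d} \<in> flats n d"
proof (rule flatsI[of "{}"])
  let ?v = "\<lambda>i::nat. {i}"
  have "{i \<in> S. j \<in> ?v i} = (if j \<in> S then {j} else {})" for S j
    by auto
  then have comb_singletons: "comb ?v S = S" for S
    by (auto simp: comb_def)
  show "dim_subspace n d (Pow {..<d})"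
    unfolding dim_subspace_def lin_subspace_def lin_indep_def
    using assms by (intro conjI exI[of _ ?v]) (auto simp: F2vec_def vadd_def comb_singletons)
qed auto

lemma card_flats_pos: "d \<le> n \<Longrightarrow> card (flats n d) > 0"
  using Pow_lessThan_in_flats finite_flats card_gt_0_iff by blast

lemma image_vadd_flat:
  assumes "t \<in> F2vec n" "Q \<in> flats n d"
  shows "vadd t ` Q \<in> flats n d"
proof -
  obtain x0 U where "x0 \<in> F2vec n" "dim_subspace n d U" "Q = vadd x0 ` U"
    using assms(2) by (auto simp: flats_def)
  moreover have "vadd t ` vadd x0 ` U = vadd (vadd t x0) ` U"
    by (simp add: image_image vadd_assoc)
  ultimately show ?thesis
    using assms(1) by (metis flatsI vadd_in_F2vec)
qed

locale linear_involution =
  fixes n :: nat and L :: "nat set \<Rightarrow> nat set"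
  assumes maps_to: "x \<in> F2vec n \<Longrightarrow> L x \<in> F2vec n"
    and involutive: "x \<in> F2vec n \<Longrightarrow> L (L x) = x"
    and additive: "x \<in> F2vec n \<Longrightarrow> y \<in> F2vec n \<Longrightarrow> L (vadd x y) = vadd (L x) (L y)"
begin

lemma map_empty [simp]: "L {} = {}"
  using additive[of "{}" "{}"] by simp

lemma map_comb:
  "finite S \<Longrightarrow> (\<And>i. i \<in> S \<Longrightarrow> v i \<in> F2vec n) \<Longrightarrow> L (comb v S) = comb (L \<circ> v) S"
proof (induction S rule: finite_induct)
  case (insert i S)
  then have "L (comb v (insert i S)) = vadd (L (v i)) (L (comb v S))"
    by (simp add: comb_insert additive comb_in_F2vec)
  then show ?case
    using insert by (simp add: comb_insert)
qed simp

lemma image_lin_subspace: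
  assumes "lin_subspace n U"
  shows "lin_subspace n (L ` U)"
proof -
  have U: "U \<subseteq> F2vec n" "{} \<in> U" "\<And>x y. x \<in> U \<Longrightarrow> y \<in> U \<Longrightarrow> vadd x y \<in> U"
    using assms by (auto simp: lin_subspace_def)
  have "vadd (L x) (L y) \<in> L ` U" if "x \<in> U" "y \<in> U" for x y
    using that U by (metis additive image_eqI subsetD)
  moreover have "{} \<in> L ` U"
    using U(2) by (metis image_eqI map_empty)
  ultimately show ?thesis
    using U(1) maps_to by (auto simp: lin_subspace_def)
qed

lemma image_dim_subspace:
  assumes "dim_subspace n d U"
  shows "dim_subspace n d (L ` U)"
proof -
  obtain v where U: "lin_subspace n U" "\<forall>i<d. v i \<in> U" "lin_indep d v"
    "U = {comb v S | S. S \<subseteq> {..<d}}"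
    using assms by (auto simp: dim_subspace_def)
  have v: "v i \<in> F2vec n" if "i < d" for i
    using U that by (auto simp: lin_subspace_def)
  have L_comb: "L (comb v S) = comb (L \<circ> v) S" if "S \<subseteq> {..<d}" for S
    using that v by (intro map_comb) (auto intro: finite_subset)
  have "lin_indep d (L \<circ> v)"
    unfolding lin_indep_def
  proof (intro allI impI)
    fix S
    assume S: "S \<subseteq> {..<d}" and "comb (L \<circ> v) S = {}"
    then have "L (L (comb v S)) = {}"
      by (simp add: L_comb)
    then have "comb v S = {}"
      using S v by (simp add: involutive comb_in_F2vec subset_eq)
    then show "S = {}"
      using U(3) S by (simp add: lin_indep_def)
  qed
  moreover have "L ` U = {comb (L \<circ> v) S | S. S \<subseteq> {..<d}}"
    using U(4) L_comb by auto
  moreover have "\<forall>i<d. (L \<circ> v) i \<in> L ` U"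
    using U(2) by simp
  ultimately show ?thesis
    unfolding dim_subspace_def using image_lin_subspace[OF U(1)] by blast
qed

lemma image_flat:
  assumes "Q \<in> flats n d"
  shows "L ` Q \<in> flats n d"
proof -
  obtain x0 U where x0: "x0 \<in> F2vec n" and U: "dim_subspace n d U" and Q: "Q = vadd x0 ` U"
    using assms by (auto simp: flats_def)
  have "U \<subseteq> F2vec n"
    using U by (simp add: dim_subspace_def lin_subspace_def)
  then have "L ` Q = vadd (L x0) ` L ` U"
    unfolding Q image_image using x0 by (intro image_cong) (auto simp: additive)
  then show ?thesis
    by (rule flatsI[OF maps_to[OF x0] image_dim_subspace[OF U]])
qed

end

lemma linear_involution_transpose:
  assumes "i < n"
  shows "linear_involution n (image (transpose 0 i))"
proof
  show "transpose 0 i ` x \<in> F2vec n" if "x \<in> F2vec n" for x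
    using that assms by (auto simp: F2vec_def transpose_def)
  show "transpose 0 i ` transpose 0 i ` x = x" for x
    by (simp add: image_image)
  show "transpose 0 i ` vadd x y = vadd (transpose 0 i ` x) (transpose 0 i ` y)" for x y
    by (simp add: vadd_def image_Un image_set_diff inj_transpose)
qed

definition transvection :: "nat set \<Rightarrow> nat set \<Rightarrow> nat set" where
  "transvection w x = (if 0 \<in> x then vadd x w else x)"

lemma linear_involution_transvection:
  assumes "w \<in> F2vec n" "0 \<notin> w"
  shows "linear_involution n (transvection w)"
proof
  show "transvection w x \<in> F2vec n" if "x \<in> F2vec n" for x
    using that assms by (simp add: transvection_def vadd_in_F2vec)
  show "transvection w (transvection w x) = x" for x
    using assms by (simp add: transvection_def mem_vadd_iff vadd_assoc)
  show "transvection w (vadd x y) = vadd (transvection w x) (transvection w y)" for x y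
    using assms by (auto simp: transvection_def set_eq_iff mem_vadd_iff)
qed

definition pair_count :: "nat \<Rightarrow> nat \<Rightarrow> nat set \<Rightarrow> nat set \<Rightarrow> nat" where
  "pair_count n d x y = card {Q \<in> flats n d. x \<in> Q \<and> y \<in> Q}"

lemma pair_count_image:
  assumes involutive: "\<And>x. x \<in> F2vec n \<Longrightarrow> f (f x) = x"
    and image_flat: "\<And>Q. Q \<in> flats n d \<Longrightarrow> f ` Q \<in> flats n d"
    and "x \<in> F2vec n" "y \<in> F2vec n"
  shows "pair_count n d (f x) (f y) = pair_count n d x y"
proof -
  have image_image_flat: "f ` f ` Q = Q" if "Q \<in> flats n d" for Q
    using flat_subset_F2vec[OF that] involutive by (force simp: image_image)
  have "bij_betw (image f) {Q \<in> flats n d. x \<in> Q \<and> y \<in> Q} {Q \<in> flats n d. f x \<in> Q \<and> f y \<in> Q}"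
  proof (rule bij_betw_byWitness[where f' = "image f"])
    have "x \<in> f ` Q" "y \<in> f ` Q" if "f x \<in> Q" "f y \<in> Q" for Q
      using that involutive assms(3,4) by (metis image_eqI)+
    then show "image f ` {Q \<in> flats n d. f x \<in> Q \<and> f y \<in> Q} \<subseteq> {Q \<in> flats n d. x \<in> Q \<and> y \<in> Q}"
      using image_flat by auto
  qed (use image_flat image_image_flat in auto)
  then show ?thesis
    unfolding pair_count_def by (simp add: bij_betw_same_card)
qed

text \<open>The affine group is transitive on pairs of distinct points: translate \<open>x\<close> to the
  origin, move a coordinate of \<open>x + y\<close> to position \<open>0\<close>, and clear the others by a
  transvection.\<close>

lemma pair_count_eq_pair_count_origin:
  assumes x: "x \<in> F2vec n" and y: "y \<in> F2vec n" and "x \<noteq> y"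
  shows "pair_count n d x y = pair_count n d {} {0}"
proof -
  let ?z = "vadd x y"
  have z: "?z \<in> F2vec n"
    using x y by (rule vadd_in_F2vec)
  have "pair_count n d (vadd x x) (vadd x y) = pair_count n d x y"
    using x y by (intro pair_count_image image_vadd_flat) (auto intro: vadd_in_F2vec)
  then have translate: "pair_count n d x y = pair_count n d {} ?z"
    by simp
  obtain i where i: "i \<in> ?z"
    using \<open>x \<noteq> y\<close> vadd_eq_empty_iff by blast
  then have "i < n"
    using z by (auto simp: F2vec_def)
  then interpret P: linear_involution n "image (transpose 0 i)"
    by (rule linear_involution_transpose)
  let ?z' = "transpose 0 i ` ?z"
  have permute: "pair_count n d {} ?z = pair_count n d {} ?z'"
    using pair_count_image[of n "image (transpose 0 i)" d "{}" ?z] P.involutive P.image_flat z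
    by simp
  have z': "?z' \<in> F2vec n" "0 \<in> ?z'"
    using P.maps_to z i by (auto intro: image_eqI[where x = i])
  let ?w = "?z' - {0}"
  have "?w \<in> F2vec n" "0 \<notin> ?w"
    using z' by (auto simp: F2vec_def)
  then interpret T: linear_involution n "transvection ?w"
    by (rule linear_involution_transvection)
  have "pair_count n d (transvection ?w {}) (transvection ?w ?z') = pair_count n d {} ?z'"
    using z' T.involutive T.image_flat by (intro pair_count_image) auto
  moreover have "transvection ?w ?z' = {0}"
    using z' by (auto simp: transvection_def vadd_def)
  ultimately show ?thesis
    using translate permute by simp
qed

lemma sum_square_sum_flat:
  "(\<Sum>Q\<in>flats n d. (\<Sum>x\<in>Q. g x)\<^sup>2) =
     (\<Sum>x\<in>F2vec n. \<Sum>y\<in>F2vec n. g x * g y * real (pair_count n d x y))"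
proof -
  have "(\<Sum>x\<in>Q. g x)\<^sup>2 = (\<Sum>x\<in>F2vec n. \<Sum>y\<in>F2vec n. g x * g y * of_bool (x \<in> Q \<and> y \<in> Q))"
    if "Q \<in> flats n d" for Q
  proof -
    have "(\<Sum>x\<in>Q. g x) = (\<Sum>x\<in>F2vec n. g x * of_bool (x \<in> Q))"
      using flat_subset_F2vec[OF that] by (simp add: Int_absorb1)
    then have "(\<Sum>x\<in>Q. g x)\<^sup>2 =
        (\<Sum>x\<in>F2vec n. g x * of_bool (x \<in> Q)) * (\<Sum>y\<in>F2vec n. g y * of_bool (y \<in> Q))"
      by (simp only: power2_eq_square)
    also have "\<dots> = (\<Sum>x\<in>F2vec n. \<Sum>y\<in>F2vec n. g x * g y * of_bool (x \<in> Q \<and> y \<in> Q))"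
      unfolding sum_product by (intro sum.cong refl) simp
    finally show ?thesis .
  qed
  then have "(\<Sum>Q\<in>flats n d. (\<Sum>x\<in>Q. g x)\<^sup>2) =
      (\<Sum>Q\<in>flats n d. \<Sum>x\<in>F2vec n. \<Sum>y\<in>F2vec n. g x * g y * of_bool (x \<in> Q \<and> y \<in> Q))"
    by simp
  also have "\<dots> = (\<Sum>x\<in>F2vec n. \<Sum>y\<in>F2vec n. \<Sum>Q\<in>flats n d. g x * g y * of_bool (x \<in> Q \<and> y \<in> Q))"
    by (subst sum.swap) (subst (2) sum.swap, rule refl)
  also have "\<dots> = (\<Sum>x\<in>F2vec n. \<Sum>y\<in>F2vec n. g x * g y * real (pair_count n d x y))"
    by (simp add: pair_count_def finite_flats Int_def mult.commute)
  finally show ?thesis .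
qed

lemma sum_pair_count_diagonal:
  "(\<Sum>x\<in>F2vec n. real (pair_count n d x x)) = real (card (flats n d)) * 2 ^ d"
proof -
  have "(\<Sum>x\<in>F2vec n. real (pair_count n d x x)) = (\<Sum>x\<in>F2vec n. \<Sum>Q\<in>flats n d. of_bool (x \<in> Q))"
    by (simp add: pair_count_def finite_flats Int_def mult.commute)
  also have "\<dots> = (\<Sum>Q\<in>flats n d. real (card Q))"
    by (subst sum.swap) (simp add: Int_absorb1 flat_subset_F2vec Int_def[symmetric])
  also have "\<dots> = real (card (flats n d)) * 2 ^ d"
    by (simp add: card_flat)
  finally show ?thesis .
qed

lemma sum_square_sum_flat_sign:
  assumes "\<And>x. x \<in> F2vec n \<Longrightarrow> (g x)\<^sup>2 = 1"
  shows "(\<Sum>Q\<in>flats n d. (\<Sum>x\<in>Q. g x)\<^sup>2) =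
     real (card (flats n d)) * 2 ^ d + real (pair_count n d {} {0}) * ((\<Sum>x\<in>F2vec n. g x)\<^sup>2 - 2 ^ n)"
proof -
  let ?c = "real (pair_count n d {} {0})"
  have "g x * g y * real (pair_count n d x y) =
      ?c * (g x * g y) + (if x = y then real (pair_count n d x x) - ?c else 0)"
    if "x \<in> F2vec n" "y \<in> F2vec n" for x y
    using pair_count_eq_pair_count_origin[OF that] assms[OF that(1)]
    by (cases "x = y") (auto simp: algebra_simps power2_eq_square)
  then have "(\<Sum>Q\<in>flats n d. (\<Sum>x\<in>Q. g x)\<^sup>2) =
      ?c * (\<Sum>x\<in>F2vec n. g x)\<^sup>2 + (\<Sum>x\<in>F2vec n. real (pair_count n d x x)) - ?c * 2 ^ n"
    unfolding sum_square_sum_flat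
    by (simp add: sum.distrib sum_subtractf power2_eq_square sum_product card_F2vec
        flip: sum_distrib_left)
  then show ?thesis
    by (simp add: sum_pair_count_diagonal algebra_simps)
qed

definition sign_of :: "nat set set \<Rightarrow> nat set \<Rightarrow> real" where
  "sign_of A x = (if x \<in> A then -1 else 1)"

lemma sign_of_square [simp]: "(sign_of A x)\<^sup>2 = 1"
  by (simp add: sign_of_def)

lemma sum_sign_of: "finite Q \<Longrightarrow> (\<Sum>x\<in>Q. sign_of A x) = real (card Q) - 2 * real (card (Q \<inter> A))"
  by (simp add: sign_of_def sum.If_cases Int_def card_Int_Diff[of Q A] Diff_eq)

lemma square_sum_sign_of_le:
  assumes "finite Q"
  shows "(\<Sum>x\<in>Q. sign_of A x)\<^sup>2 \<le> (if 2 * card (Q \<inter> A) = card Q then 0 else (real (card Q))\<^sup>2)"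
proof -
  have "real (card (Q \<inter> A)) \<le> real (card Q)"
    using assms by (simp add: card_mono)
  then have "(real (card Q) - 2 * real (card (Q \<inter> A)))\<^sup>2 \<le> (real (card Q))\<^sup>2"
    using mult_right_mono[of "real (card (Q \<inter> A))" "real (card Q)" "real (card (Q \<inter> A))"]
    by (simp add: power2_eq_square algebra_simps)
  then show ?thesis
    using assms by (simp add: sum_sign_of)
qed

lemma square_sum_sign_of_eq:
  assumes "finite Q" "Q \<inter> A = {} \<or> Q \<subseteq> A \<or> 2 * card (Q \<inter> A) = card Q"
  shows "(\<Sum>x\<in>Q. sign_of A x)\<^sup>2 = (if 2 * card (Q \<inter> A) = card Q then 0 else (real (card Q))\<^sup>2)"
  using assms by (auto simp: sum_sign_of Int_absorb2 power2_eq_square)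

lemma two_card_Int_eq_card:
  assumes "finite Z" "\<And>x. x \<in> Z \<Longrightarrow> h x \<in> Z" "\<And>x. x \<in> Z \<Longrightarrow> h (h x) = x"
    "\<And>x. x \<in> Z \<Longrightarrow> h x \<in> A \<longleftrightarrow> x \<notin> A"
  shows "2 * card (Z \<inter> A) = card Z"
proof -
  have "bij_betw h (Z \<inter> A) (Z - A)"
    by (rule bij_betw_byWitness[where f' = h]) (use assms in auto)
  then have "card (Z \<inter> A) = card (Z - A)"
    by (rule bij_betw_same_card)
  then show ?thesis
    using card_Int_Diff[OF assms(1), of A] by simp
qed

definition coord_hyperplane :: "nat \<Rightarrow> nat set set" where
  "coord_hyperplane n = {x \<in> F2vec n. 0 \<in> x}"

lemma flat_Int_coord_hyperplane:
  assumes Q: "Q \<in> flats n d"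
  shows "Q \<inter> coord_hyperplane n = {} \<or> Q \<subseteq> coord_hyperplane n \<or>
    2 * card (Q \<inter> coord_hyperplane n) = card Q"
proof (rule flatsE[OF Q])
  fix x0 U v
  assume U: "lin_subspace n U" and Q_eq: "Q = vadd x0 ` U"
  have Q_sub: "Q \<subseteq> F2vec n"
    using Q by (rule flat_subset_F2vec)
  show ?thesis
  proof (cases "\<exists>u\<in>U. 0 \<in> u")
    case True
    then obtain u where u: "u \<in> U" "0 \<in> u"
      by auto
    have "vadd u x \<in> Q" if "x \<in> Q" for x
    proof -
      obtain u' where "u' \<in> U" "x = vadd x0 u'"
        using \<open>x \<in> Q\<close> Q_eq by auto
      moreover have "vadd u' u \<in> U"
        using U u \<open>u' \<in> U\<close> by (simp add: lin_subspace_def)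
      ultimately show ?thesis
        using Q_eq by (auto simp: vadd_assoc vadd_commute[of u])
    qed
    then have "2 * card (Q \<inter> coord_hyperplane n) = card Q"
      using Q_sub u by (intro two_card_Int_eq_card[where h = "vadd u"] finite_flat[OF Q])
        (auto simp: coord_hyperplane_def mem_vadd_iff)
    then show ?thesis
      by simp
  next
    case False
    then have "\<forall>y\<in>Q. 0 \<in> y \<longleftrightarrow> 0 \<in> x0"
      using Q_eq by (auto simp: mem_vadd_iff)
    then show ?thesis
      using Q_sub by (auto simp: coord_hyperplane_def)
  qed
qed

lemma sum_sign_of_coord_hyperplane:
  assumes "n \<ge> 1"
  shows "(\<Sum>x\<in>F2vec n. sign_of (coord_hyperplane n) x) = 0"
proof -
  have "{0} \<in> F2vec n"
    using assms by (auto simp: F2vec_def)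
  then have "2 * card (F2vec n \<inter> coord_hyperplane n) = card (F2vec n)"
    by (intro two_card_Int_eq_card[where h = "vadd {0}"])
      (auto simp: coord_hyperplane_def mem_vadd_iff vadd_in_F2vec)
  then show ?thesis
    by (simp add: sum_sign_of)
qed

definition unbalanced_flats :: "nat \<Rightarrow> nat \<Rightarrow> nat set set \<Rightarrow> nat set set set" where
  "unbalanced_flats n d A = {Q \<in> flats n d. card (Q \<inter> A) \<noteq> 2 ^ (d - 1)}"

lemma card_unbalanced_flats_eq_sum:
  assumes "d \<ge> 1"
  shows "4 ^ d * real (card (unbalanced_flats n d A)) =
    (\<Sum>Q\<in>flats n d. if 2 * card (Q \<inter> A) = card Q then 0 else (real (card Q))\<^sup>2)"
proof -
  have half: "2 * card (Q \<inter> A) = card Q \<longleftrightarrow> card (Q \<inter> A) = 2 ^ (d - 1)"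
    if "Q \<in> flats n d" for Q
    using card_flat[OF that] assms by (cases d) auto
  have square: "(real (card Q))\<^sup>2 = 4 ^ d" if "Q \<in> flats n d" for Q
    by (simp add: card_flat[OF that] power2_eq_square flip: power_mult_distrib)
  have "4 ^ d * real (card (unbalanced_flats n d A)) =
      (\<Sum>Q\<in>flats n d. 4 ^ d * of_bool (card (Q \<inter> A) \<noteq> 2 ^ (d - 1)))"
    by (simp add: unbalanced_flats_def finite_flats Collect_conj_eq flip: sum_distrib_left)
  also have "\<dots> = (\<Sum>Q\<in>flats n d. if 2 * card (Q \<inter> A) = card Q then 0 else (real (card Q))\<^sup>2)"
    by (intro sum.cong refl) (simp add: half square)
  finally show ?thesis .
qed

lemma sum_square_sum_sign_of_le:
  assumes "d \<ge> 1"
  shows "(\<Sum>Q\<in>flats n d. (\<Sum>x\<in>Q. sign_of A x)\<^sup>2) \<le> 4 ^ d * real (card (unbalanced_flats n d A))"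
  unfolding card_unbalanced_flats_eq_sum[OF assms]
  by (intro sum_mono square_sum_sign_of_le finite_flat)

lemma sum_square_sum_sign_of_coord_hyperplane:
  assumes "d \<ge> 1"
  shows "(\<Sum>Q\<in>flats n d. (\<Sum>x\<in>Q. sign_of (coord_hyperplane n) x)\<^sup>2) =
    4 ^ d * real (card (unbalanced_flats n d (coord_hyperplane n)))"
  unfolding card_unbalanced_flats_eq_sum[OF assms]
  by (intro sum.cong refl square_sum_sign_of_eq finite_flat flat_Int_coord_hyperplane)

lemma pair_count_origin_eq:
  "real (pair_count n d {} {0}) * (4 ^ n - 2 ^ n) = real (card (flats n d)) * (4 ^ d - 2 ^ d)"
proof -
  have "(\<Sum>Q\<in>flats n d. (\<Sum>x\<in>Q. 1 :: real)\<^sup>2) = real (card (flats n d)) * 4 ^ d"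
    by (simp add: card_flat power2_eq_square flip: power_mult_distrib)
  moreover have "(\<Sum>x\<in>F2vec n. 1 :: real)\<^sup>2 = 4 ^ n"
    by (simp add: card_F2vec power2_eq_square flip: power_mult_distrib)
  ultimately show ?thesis
    using sum_square_sum_flat_sign[of n "\<lambda>_. 1" d] by (simp add: algebra_simps)
qed

lemma card_unbalanced_flats_ge:
  assumes "d \<ge> 1"
  shows "real (card (flats n d)) * 2 ^ d - real (pair_count n d {} {0}) * 2 ^ n
    \<le> 4 ^ d * real (card (unbalanced_flats n d A))"
proof -
  let ?c = "real (pair_count n d {} {0})" and ?\<sigma> = "\<Sum>x\<in>F2vec n. sign_of A x"
  have "(\<Sum>Q\<in>flats n d. (\<Sum>x\<in>Q. sign_of A x)\<^sup>2) =
      real (card (flats n d)) * 2 ^ d + ?c * ?\<sigma>\<^sup>2 - ?c * 2 ^ n"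
    using sum_square_sum_flat_sign[of n "sign_of A" d] by (simp add: algebra_simps)
  moreover have "0 \<le> ?c * ?\<sigma>\<^sup>2"
    by simp
  ultimately show ?thesis
    using sum_square_sum_sign_of_le[OF assms, where n = n and A = A] by linarith
qed

lemma card_unbalanced_flats_coord_hyperplane:
  assumes "d \<ge> 1" "n \<ge> 1"
  shows "4 ^ d * real (card (unbalanced_flats n d (coord_hyperplane n))) =
    real (card (flats n d)) * 2 ^ d - real (pair_count n d {} {0}) * 2 ^ n"
  using sum_square_sum_sign_of_coord_hyperplane[OF assms(1)]
    sum_square_sum_flat_sign[of n "sign_of (coord_hyperplane n)" d]
    sum_sign_of_coord_hyperplane[OF assms(2)]
  by simp

lemma card_unbalanced_flats_coord_hyperplane_le:
  assumes "d \<ge> 1" "n \<ge> 1"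
  shows "card (unbalanced_flats n d (coord_hyperplane n)) \<le> card (unbalanced_flats n d A)"
proof -
  have "4 ^ d * real (card (unbalanced_flats n d (coord_hyperplane n)))
      \<le> 4 ^ d * real (card (unbalanced_flats n d A))"
    unfolding card_unbalanced_flats_coord_hyperplane[OF assms] by (rule card_unbalanced_flats_ge[OF assms(1)])
  then show ?thesis
    by simp
qed

lemma lambdaA_half:
  assumes "d \<le> n"
  shows "lambdaA n d (2 ^ (d - 1)) A =
    1 - real (card (unbalanced_flats n d A)) / real (card (flats n d))"
proof -
  have "card (flats n d) =
      card {Q \<in> flats n d. card (Q \<inter> A) = 2 ^ (d - 1)} + card (unbalanced_flats n d A)"
    unfolding unbalanced_flats_def using finite_flats
    by (subst card_Un_disjoint[symmetric]) (auto intro: arg_cong[where f = card])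
  moreover have "real (card (flats n d)) > 0"
    using card_flats_pos[OF assms] by simp
  ultimately show ?thesis
    by (simp add: lambdaA_def field_simps)
qed

lemma lambda_n_eq_lambdaA:
  assumes "A\<^sub>0 \<subseteq> F2vec n" "\<And>A. A \<subseteq> F2vec n \<Longrightarrow> lambdaA n d s A \<le> lambdaA n d s A\<^sub>0"
  shows "lambda_n n d s = lambdaA n d s A\<^sub>0"
  unfolding lambda_n_def
proof (rule Max_eqI)
  have "{lambdaA n d s A | A. A \<subseteq> F2vec n} = lambdaA n d s ` Pow (F2vec n)"
    by auto
  then show "finite {lambdaA n d s A | A. A \<subseteq> F2vec n}"
    by simp
qed (use assms in auto)

lemma lambda_n_half_eq_coord_hyperplane:
  assumes "1 \<le> d" "d \<le> n"
  shows "lambda_n n d (2 ^ (d - 1)) =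
    1 - real (card (unbalanced_flats n d (coord_hyperplane n))) / real (card (flats n d))"
proof -
  have "n \<ge> 1"
    using assms by simp
  have "lambda_n n d (2 ^ (d - 1)) = lambdaA n d (2 ^ (d - 1)) (coord_hyperplane n)"
  proof (rule lambda_n_eq_lambdaA)
    show "coord_hyperplane n \<subseteq> F2vec n"
      by (auto simp: coord_hyperplane_def)
    show "lambdaA n d (2 ^ (d - 1)) A \<le> lambdaA n d (2 ^ (d - 1)) (coord_hyperplane n)" for A
      unfolding lambdaA_half[OF assms(2)]
      using card_unbalanced_flats_coord_hyperplane_le[OF assms(1) \<open>n \<ge> 1\<close>, of A]
      by (intro diff_left_mono divide_right_mono) auto
  qed
  also have "\<dots> = 1 - real (card (unbalanced_flats n d (coord_hyperplane n))) / real (card (flats n d))"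
    by (rule lambdaA_half[OF assms(2)])
  finally show ?thesis .
qed

lemma lambda_n_half:
  assumes "1 \<le> d" "d \<le> n"
  shows "lambda_n n d (2 ^ (d - 1)) = (1 - 1 / 2 ^ d) * (1 + 1 / (2 ^ n - 1))"
proof -
  define F where "F = real (card (flats n d))"
  define c where "c = real (pair_count n d {} {0})"
  define u where "u = real (card (unbalanced_flats n d (coord_hyperplane n)))"
  have "n \<ge> 1"
    using assms by simp
  have F: "F > 0"
    unfolding F_def using card_flats_pos[OF assms(2)] by simp
  have N: "(2::real) ^ n > 1"
    using \<open>n \<ge> 1\<close> by simp
  have four: "(4::real) ^ k = 2 ^ k * 2 ^ k" for k
    by (simp flip: power_mult_distrib)
  have u: "u = (F * 2 ^ d - c * 2 ^ n) / (2 ^ d * 2 ^ d)"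
    using card_unbalanced_flats_coord_hyperplane[OF assms(1) \<open>n \<ge> 1\<close>]
    unfolding F_def c_def u_def four by (simp add: field_simps)
  have c: "c = F * (2 ^ d * 2 ^ d - 2 ^ d) / (2 ^ n * (2 ^ n - 1))"
    using pair_count_origin_eq[of n d] N unfolding F_def c_def four by (simp add: field_simps)
  show ?thesis
    unfolding lambda_n_half_eq_coord_hyperplane[OF assms] F_def[symmetric] u_def[symmetric] u c
    using F N by (simp add: field_simps)
qed

theorem theorem1p4:
  fixes d :: nat
  assumes "d > 1"
  shows "(\<lambda>n. lambda_n n d (2 ^ (d - 1))) \<longlonglongrightarrow> 1 - 1 / 2 ^ d"
proof -
  have "(\<lambda>n. (1 - 1 / 2 ^ d) * (1 + 1 / (2 ^ n - 1)) :: real) \<longlonglongrightarrow> 1 - 1 / 2 ^ d"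
    by real_asymp
  moreover have "\<forall>\<^sub>F n in sequentially. (1 - 1 / 2 ^ d) * (1 + 1 / (2 ^ n - 1)) = lambda_n n d (2 ^ (d - 1))"
    using assms by (intro eventually_sequentiallyI[of d] lambda_n_half[symmetric]) auto
  ultimately show ?thesis
    by (rule Lim_transform_eventually)
qed

end
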